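(* For every integer $n\ge 0$, $$\Phi^{(3)}[a, a'; b, b'; cq^{-n}; x, y] = \frac{1}{(q/c; q)_n} \sum_{k=0}^n \begin{bmatrix} n \\ k \end{bmatrix} (-c)^{k-n} q^{\binom{n+1-k}{2}} \Phi^{(3)}[a, a'; b, b'; c; xq^k, yq^k]$$ and $$\Phi^{(3)}[a, a'; b, b'; cq^n; x, y] = \sum_{k=0}^n \begin{bmatrix} n \\ k \end{bmatrix} c^k q^{2\binom{k}{2}} (cq^k; q)_{n-k}\, \Phi^{(3)}[a, a'; b, b'; cq^k; xq^k, yq^k].$$
   Context: Let $q$ be a complex number with $0<|q|<1$. For complex $z$ and integer $m\ge 0$, $(z;q)_m=\prod_{j=0}^{m-1}(1-zq^j)$, with $(z;q)_0=1$. For integers $0\le k\le n$, $\begin{bmatrix} n \\ k \end{bmatrix}=\frac{(q;q)_n}{(q;q)_k(q;q)_{n-k}}$ is the $q$-binomial coefficient, and $\binom{j}{2}=j(j-1)/2$. The $q$-Appell function $\Phi^{(3)}$ is $$\Phi^{(3)}[a, a'; b, b'; c; x, y] = \sum_{m, n \geq 0} \frac{(a; q)_m (a'; q)_n (b; q)_m (b'; q)_n}{(q; q)_m (q; q)_n (c; q)_{m+n}} x^m y^n.$$ Identities are understood as identities of power series in $x,y$ (formal, or convergent for small $|x|,|y|$), with complex parameters chosen so that no denominator occurring vanishes. *)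

theory Defs
  imports "HOL-Analysis.Analysis"
begin

definition qpoch :: "complex \<Rightarrow> complex \<Rightarrow> nat \<Rightarrow> complex" where
  "qpoch z q m = (\<Prod>j<m. 1 - z * q ^ j)"

definition qbinom :: "complex \<Rightarrow> nat \<Rightarrow> nat \<Rightarrow> complex" where
  "qbinom q n k = qpoch q q n / (qpoch q q k * qpoch q q (n - k))"

definition Phi3 :: "complex \<Rightarrow> complex \<Rightarrow> complex \<Rightarrow> complex \<Rightarrow> complex \<Rightarrow> complex
    \<Rightarrow> complex \<Rightarrow> complex \<Rightarrow> complex" where
  "Phi3 q a a' b b' c x y =
     (\<Sum>\<^sub>\<infinity>(m, n) \<in> UNIV.
        qpoch a q m * qpoch a' q n * qpoch b q m * qpoch b' q n
        / (qpoch q q m * qpoch q q n * qpoch c q (m + n)) * x ^ m * y ^ n)"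

end

theory Submission
  imports Defs
begin

(* Both identities are proved coefficientwise. In the (m, n)-coefficient of the double series,
   the parameter c and the scaling x, y -> x q^k, y q^k enter only through the factor
   q^(k (m + n)) / (c;q)_(m+n), so by absolute convergence each identity reduces to an expansion
   of 1 / (c';q)_N with N = m + n. For c' = c q^n this is the identity
   sum_k [n,k] z^k q^(k (k - 1)) (z q^k;q)_(n-k) = 1 at z = c q^N, proved by q-Pascal induction;
   for c' = c q^(-n) it is the q-binomial theorem at u = c q^(N-n), once (c q^(-n);q)_n has been
   reflected into (q/c;q)_n. *)

lemma qpoch_0 [simp]: "qpoch z q 0 = 1"
  by (simp add: qpoch_def)

lemma qpoch_zero_left [simp]: "qpoch 0 q n = 1"
  by (simp add: qpoch_def)

lemma qpoch_Suc: "qpoch z q (Suc n) = qpoch z q n * (1 - z * q ^ n)"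
  by (simp add: qpoch_def)

lemma qpoch_Suc_left: "qpoch z q (Suc n) = (1 - z) * qpoch (z * q) q n"
  unfolding qpoch_def prod.lessThan_Suc_shift by (simp add: mult.assoc)

lemma qpoch_add: "qpoch z q (m + n) = qpoch z q m * qpoch (z * q ^ m) q n"
  by (induction n) (simp_all add: qpoch_Suc power_add mult_ac)

lemma qpoch_nonzero: "(\<And>j. j < n \<Longrightarrow> z * q ^ j \<noteq> 1) \<Longrightarrow> qpoch z q n \<noteq> 0"
  by (simp add: qpoch_def)

lemma Suc_choose_two: "Suc n choose 2 = (n choose 2) + n"
  by (simp add: numeral_2_eq_2)

lemma choose_two_reflect:
  assumes "k \<le> n"
  shows "(Suc n - k choose 2) + k * n = (k choose 2) + (Suc n choose 2)"
proof -
  obtain d where "n = k + d" using assms le_Suc_ex by blast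
  moreover have "(Suc d choose 2) + k * (k + d) = (k choose 2) + (Suc (k + d) choose 2)"
    by (induction k) (simp_all add: Suc_choose_two algebra_simps)
  ultimately show ?thesis by (simp add: Suc_diff_le)
qed

lemma qpoch_reflect:
  assumes "q \<noteq> 0" "c \<noteq> 0"
  shows "qpoch (c / q ^ n) q n * q ^ (Suc n choose 2) = (- c) ^ n * qpoch (q / c) q n"
proof (induction n)
  case (Suc n)
  have "qpoch (c / q ^ Suc n) q (Suc n) * q ^ (Suc (Suc n) choose 2)
      = (1 - c / q ^ Suc n) * q ^ Suc n * (qpoch (c / q ^ n) q n * q ^ (Suc n choose 2))"
    using assms by (simp add: qpoch_Suc_left Suc_choose_two[of "Suc n"] power_add field_simps)
  also have "\<dots> = (- c) ^ Suc n * qpoch (q / c) q (Suc n)"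
    using assms by (simp add: Suc qpoch_Suc field_simps)
  finally show ?case .
qed (simp add: numeral_2_eq_2)

lemma qbinom_0: "qpoch q q n \<noteq> 0 \<Longrightarrow> qbinom q n 0 = 1"
  by (simp add: qbinom_def)

lemma qbinom_self: "qpoch q q n \<noteq> 0 \<Longrightarrow> qbinom q n n = 1"
  by (simp add: qbinom_def)

lemma qbinom_Suc_Suc:
  assumes qq: "\<And>m. qpoch q q m \<noteq> 0" and "k < n"
  shows "qbinom q (Suc n) (Suc k) = q ^ Suc k * qbinom q n (Suc k) + qbinom q n k"
    and "qbinom q (Suc n) (Suc k) = qbinom q n (Suc k) + q ^ (n - k) * qbinom q n k"
proof -
  obtain d where n: "n = Suc (k + d)" using \<open>k < n\<close> less_iff_Suc_add by auto
  have nz: "qpoch q q k \<noteq> 0" "qpoch q q d \<noteq> 0" "1 - q * q ^ k \<noteq> 0" "1 - q * q ^ d \<noteq> 0"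
    using qq[of k] qq[of d] qq[of "Suc k"] qq[of "Suc d"] by (auto simp: qpoch_Suc)
  have diffs: "Suc n - Suc k = Suc d" "n - Suc k = d" "n - k = Suc d" using n by auto
  have "q ^ n = q ^ k * q * q ^ d" using n by (simp add: power_add)
  then show "qbinom q (Suc n) (Suc k) = q ^ Suc k * qbinom q n (Suc k) + qbinom q n k"
    and "qbinom q (Suc n) (Suc k) = qbinom q n (Suc k) + q ^ (n - k) * qbinom q n k"
    unfolding qbinom_def diffs qpoch_Suc using nz
    by (simp_all add: divide_simps) (simp_all add: algebra_simps)
qed

(* Both q-Pascal rules have this shape. They hold only for k < n, because qbinom q n k is not 0
   for k > n. *)
lemma sum_qbinom_Suc_recurrence:
  assumes qq: "\<And>m. qpoch q q m \<noteq> 0"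
    and rec: "\<And>k. k < n \<Longrightarrow>
      qbinom q (Suc n) (Suc k) = \<alpha> (Suc k) * qbinom q n (Suc k) + \<beta> k * qbinom q n k"
    and "\<alpha> 0 = 1" "\<beta> n = 1"
  shows "(\<Sum>k\<le>Suc n. qbinom q (Suc n) k * f k)
       = (\<Sum>k\<le>n. qbinom q n k * (\<alpha> k * f k + \<beta> k * f (Suc k)))"
proof -
  have "(\<Sum>k\<le>Suc n. qbinom q (Suc n) k * f k)
      = f 0 + (\<Sum>k\<le>n. qbinom q (Suc n) (Suc k) * f (Suc k))"
    using qq by (subst sum.atMost_Suc_shift) (simp add: qbinom_0)
  also have "(\<Sum>k\<le>n. qbinom q (Suc n) (Suc k) * f (Suc k))
      = (\<Sum>k<n. qbinom q (Suc n) (Suc k) * f (Suc k)) + f (Suc n)"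
    using qq by (simp add: lessThan_Suc_atMost [symmetric] qbinom_self)
  also have "(\<Sum>k<n. qbinom q (Suc n) (Suc k) * f (Suc k))
      = (\<Sum>k<n. \<alpha> (Suc k) * qbinom q n (Suc k) * f (Suc k)) + (\<Sum>k<n. \<beta> k * qbinom q n k * f (Suc k))"
    by (simp add: rec distrib_right flip: sum.distrib)
  also have "(\<Sum>k<n. \<alpha> (Suc k) * qbinom q n (Suc k) * f (Suc k))
      = (\<Sum>k\<le>n. qbinom q n k * (\<alpha> k * f k)) - f 0"
    unfolding lessThan_Suc_atMost [symmetric] sum.lessThan_Suc_shift
    using qq \<open>\<alpha> 0 = 1\<close> by (simp add: qbinom_0 mult_ac)
  also have "(\<Sum>k<n. \<beta> k * qbinom q n k * f (Suc k))
      = (\<Sum>k\<le>n. qbinom q n k * (\<beta> k * f (Suc k))) - f (Suc n)"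
    unfolding lessThan_Suc_atMost [symmetric] sum.lessThan_Suc
    using qq \<open>\<beta> n = 1\<close> by (simp add: qbinom_self mult_ac)
  finally show ?thesis
    by (simp add: distrib_left sum.distrib)
qed

lemma sum_qbinom_Suc:
  assumes "\<And>m. qpoch q q m \<noteq> 0"
  shows "(\<Sum>k\<le>Suc n. qbinom q (Suc n) k * f k) = (\<Sum>k\<le>n. qbinom q n k * (q ^ k * f k + f (Suc k)))"
  using sum_qbinom_Suc_recurrence[of q n "\<lambda>k. q ^ k" "\<lambda>_. 1" f] assms
  by (simp add: qbinom_Suc_Suc(1))

lemma sum_qbinom_Suc':
  assumes "\<And>m. qpoch q q m \<noteq> 0"
  shows "(\<Sum>k\<le>Suc n. qbinom q (Suc n) k * f k)
       = (\<Sum>k\<le>n. qbinom q n k * (f k + q ^ (n - k) * f (Suc k)))"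
  using sum_qbinom_Suc_recurrence[of q n "\<lambda>_. 1" "\<lambda>k. q ^ (n - k)" f] assms
  by (simp add: qbinom_Suc_Suc(2))

theorem qbinomial_theorem:
  assumes qq: "\<And>m. qpoch q q m \<noteq> 0"
  shows "qpoch u q n = (\<Sum>k\<le>n. qbinom q n k * ((- u) ^ k * q ^ (k choose 2)))"
proof (induction n arbitrary: u)
  case 0
  show ?case using qq by (simp add: qbinom_0 numeral_2_eq_2)
next
  case (Suc n)
  have "(\<Sum>k\<le>Suc n. qbinom q (Suc n) k * ((- u) ^ k * q ^ (k choose 2)))
      = (\<Sum>k\<le>n. qbinom q n k * (q ^ k * ((- u) ^ k * q ^ (k choose 2))
                                    + (- u) ^ Suc k * q ^ (Suc k choose 2)))"
    by (simp only: sum_qbinom_Suc[OF qq])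
  also have "\<dots> = (1 - u) * (\<Sum>k\<le>n. qbinom q n k * ((- (u * q)) ^ k * q ^ (k choose 2)))"
    unfolding sum_distrib_left
  proof (rule sum.cong)
    fix k
    have "(- (u * q)) ^ k = (- u) ^ k * q ^ k"
      by (metis mult_minus_left power_mult_distrib)
    then show "qbinom q n k * (q ^ k * ((- u) ^ k * q ^ (k choose 2))
          + (- u) ^ Suc k * q ^ (Suc k choose 2))
        = (1 - u) * (qbinom q n k * ((- (u * q)) ^ k * q ^ (k choose 2)))"
      by (simp only: Suc_choose_two power_add power_Suc) (simp add: algebra_simps)
  qed simp
  also have "\<dots> = qpoch u q (Suc n)"
    by (simp add: Suc qpoch_Suc_left)
  finally show ?case ..
qed

lemma sum_qbinom_qpoch_eq_1:
  assumes qq: "\<And>m. qpoch q q m \<noteq> 0"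
  shows "(\<Sum>k\<le>n. qbinom q n k * (z ^ k * q ^ (2 * (k choose 2)) * qpoch (z * q ^ k) q (n - k))) = 1"
proof (induction n arbitrary: z)
  case 0
  show ?case using qq by (simp add: qbinom_0 numeral_2_eq_2)
next
  case (Suc n)
  define g where "g z k = z ^ k * q ^ (2 * (k choose 2)) * qpoch (z * q ^ k) q (n - k)" for z k
  have "(\<Sum>k\<le>Suc n. qbinom q (Suc n) k * (z ^ k * q ^ (2 * (k choose 2)) * qpoch (z * q ^ k) q (Suc n - k)))
      = (\<Sum>k\<le>n. qbinom q n k * (z ^ k * q ^ (2 * (k choose 2)) * qpoch (z * q ^ k) q (Suc n - k)
          + q ^ (n - k) * (z ^ Suc k * q ^ (2 * (Suc k choose 2)) * qpoch (z * q ^ Suc k) q (Suc n - Suc k))))"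
    by (simp only: sum_qbinom_Suc'[OF qq])
  also have "\<dots> = (\<Sum>k\<le>n. qbinom q n k * ((1 - z * q ^ n) * g z k + z * q ^ n * g (z * q) k))"
  proof (rule sum.cong)
    fix k assume "k \<in> {..n}"
    then have k: "k \<le> n" by simp
    have "z * q ^ k * q ^ (n - k) = z * q ^ n"
      using k by (simp add: mult.assoc flip: power_add)
    then have "qpoch (z * q ^ k) q (Suc n - k) = qpoch (z * q ^ k) q (n - k) * (1 - z * q ^ n)"
      using k by (simp add: Suc_diff_le qpoch_Suc)
    then have first: "z ^ k * q ^ (2 * (k choose 2)) * qpoch (z * q ^ k) q (Suc n - k)
        = (1 - z * q ^ n) * g z k"
      by (simp add: g_def mult_ac)
    have split: "q ^ n = q ^ (n - k) * q ^ k"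
      using k by (simp flip: power_add)
    have powers: "q ^ (n - k) * (z ^ Suc k * q ^ (2 * (Suc k choose 2)))
        = z * q ^ n * ((z * q) ^ k * q ^ (2 * (k choose 2)))"
      by (simp only: split Suc_choose_two mult_2 power_add power_Suc power_mult_distrib)
        (simp only: ac_simps)
    have "qpoch (z * q ^ Suc k) q (Suc n - Suc k) = qpoch (z * q * q ^ k) q (n - k)"
      by (simp add: mult.assoc)
    then have second: "q ^ (n - k) * (z ^ Suc k * q ^ (2 * (Suc k choose 2)) * qpoch (z * q ^ Suc k) q (Suc n - Suc k))
        = z * q ^ n * g (z * q) k"
      using powers unfolding g_def by (metis mult.assoc)
    show "qbinom q n k * (z ^ k * q ^ (2 * (k choose 2)) * qpoch (z * q ^ k) q (Suc n - k)
          + q ^ (n - k) * (z ^ Suc k * q ^ (2 * (Suc k choose 2)) * qpoch (z * q ^ Suc k) q (Suc n - Suc k)))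
        = qbinom q n k * ((1 - z * q ^ n) * g z k + z * q ^ n * g (z * q) k)"
      by (simp only: first second)
  qed simp
  also have "\<dots> = (1 - z * q ^ n) * (\<Sum>k\<le>n. qbinom q n k * g z k)
      + z * q ^ n * (\<Sum>k\<le>n. qbinom q n k * g (z * q) k)"
    by (simp add: sum_distrib_left sum.distrib distrib_left mult.left_commute)
  also have "\<dots> = 1"
    using Suc[of z] Suc[of "z * q"] by (simp add: g_def)
  finally show ?case .
qed

lemma inverse_qpoch_mult_power_expansion:
  assumes qq: "\<And>m. qpoch q q m \<noteq> 0" and c: "\<And>j. c * q ^ j \<noteq> 1"
  shows "(\<Sum>k\<le>n. qbinom q n k * c ^ k * q ^ (2 * (k choose 2)) * qpoch (c * q ^ k) q (n - k)
            * q ^ (k * N) / qpoch (c * q ^ k) q N) = 1 / qpoch (c * q ^ n) q N"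
proof -
  have nz: "qpoch (c * q ^ k) q M \<noteq> 0" for k M
    by (rule qpoch_nonzero) (use c in \<open>simp add: mult.assoc flip: power_add\<close>)
  have "(\<Sum>k\<le>n. qbinom q n k * c ^ k * q ^ (2 * (k choose 2)) * qpoch (c * q ^ k) q (n - k)
            * q ^ (k * N) / qpoch (c * q ^ k) q N) * qpoch (c * q ^ n) q N
      = (\<Sum>k\<le>n. qbinom q n k * ((c * q ^ N) ^ k * q ^ (2 * (k choose 2)) * qpoch (c * q ^ N * q ^ k) q (n - k)))"
    unfolding sum_distrib_right
  proof (rule sum.cong)
    fix k assume "k \<in> {..n}"
    then have split: "c * q ^ n = c * q ^ k * q ^ (n - k)"
      by (simp add: mult.assoc flip: power_add)
    have "qpoch (c * q ^ k) q (n - k) * qpoch (c * q ^ n) q N = qpoch (c * q ^ k) q ((n - k) + N)"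
      by (simp only: qpoch_add split)
    also have "\<dots> = qpoch (c * q ^ k) q N * qpoch (c * q ^ k * q ^ N) q (n - k)"
      by (simp only: add.commute[of "n - k" N] qpoch_add)
    finally have merge: "qpoch (c * q ^ k) q (n - k) * qpoch (c * q ^ n) q N
        = qpoch (c * q ^ k) q N * qpoch (c * q ^ N * q ^ k) q (n - k)"
      by (simp only: ac_simps)
    have "(c * q ^ N) ^ k = c ^ k * q ^ (k * N)"
      by (simp add: power_mult_distrib mult.commute flip: power_mult)
    then have "qbinom q n k * c ^ k * q ^ (2 * (k choose 2)) * qpoch (c * q ^ k) q (n - k)
            * q ^ (k * N) / qpoch (c * q ^ k) q N * qpoch (c * q ^ n) q N
        = qbinom q n k * (c * q ^ N) ^ k * q ^ (2 * (k choose 2))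
            * (qpoch (c * q ^ k) q (n - k) * qpoch (c * q ^ n) q N) / qpoch (c * q ^ k) q N"
      by (simp add: ac_simps)
    also have "\<dots> = qbinom q n k * (c * q ^ N) ^ k * q ^ (2 * (k choose 2))
            * qpoch (c * q ^ N * q ^ k) q (n - k)"
      using nz[of k N] by (simp add: merge)
    finally show "qbinom q n k * c ^ k * q ^ (2 * (k choose 2)) * qpoch (c * q ^ k) q (n - k)
            * q ^ (k * N) / qpoch (c * q ^ k) q N * qpoch (c * q ^ n) q N
        = qbinom q n k * ((c * q ^ N) ^ k * q ^ (2 * (k choose 2)) * qpoch (c * q ^ N * q ^ k) q (n - k))"
      by (simp only: ac_simps)
  qed simp
  also have "\<dots> = 1"
    by (rule sum_qbinom_qpoch_eq_1[OF qq])
  finally show ?thesis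
    using nz[of n N] by (simp add: field_simps)
qed

lemma qbinomial_theorem_reversed:
  assumes qq: "\<And>m. qpoch q q m \<noteq> 0" and "q \<noteq> 0" "c \<noteq> 0"
  shows "(\<Sum>k\<le>n. qbinom q n k * (- c) powi (int k - int n) * q ^ (Suc n - k choose 2) * w ^ k)
       = q ^ (Suc n choose 2) / (- c) ^ n * qpoch (c * w / q ^ n) q n"
proof -
  have "(\<Sum>k\<le>n. qbinom q n k * (- c) powi (int k - int n) * q ^ (Suc n - k choose 2) * w ^ k)
      = (\<Sum>k\<le>n. q ^ (Suc n choose 2) / (- c) ^ n * (qbinom q n k * ((- (c * w / q ^ n)) ^ k * q ^ (k choose 2))))"
  proof (rule sum.cong)
    fix k assume "k \<in> {..n}"
    then have exponents: "q ^ (Suc n - k choose 2) * q ^ (k * n) = q ^ (k choose 2) * q ^ (Suc n choose 2)"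
      by (simp add: choose_two_reflect flip: power_add)
    have scale: "(- (c * w / q ^ n)) ^ k * q ^ (k * n) = (- c) ^ k * w ^ k"
      using \<open>q \<noteq> 0\<close>
      by (simp add: power_mult_distrib power_divide power_minus' mult.commute[of n] flip: power_mult)
    have "(- c) ^ k * w ^ k * q ^ (Suc n - k choose 2) = (- (c * w / q ^ n)) ^ k * q ^ (k * n) * q ^ (Suc n - k choose 2)"
      by (simp only: scale)
    also have "\<dots> = (- (c * w / q ^ n)) ^ k * q ^ (k choose 2) * q ^ (Suc n choose 2)"
      by (simp only: mult.assoc flip: exponents) (simp only: ac_simps)
    finally have key: "(- c) ^ k * w ^ k * q ^ (Suc n - k choose 2)
        = (- (c * w / q ^ n)) ^ k * q ^ (k choose 2) * q ^ (Suc n choose 2)" .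
    have "qbinom q n k * (- c) powi (int k - int n) * q ^ (Suc n - k choose 2) * w ^ k
        = qbinom q n k / (- c) ^ n * ((- c) ^ k * w ^ k * q ^ (Suc n - k choose 2))"
      using assms by (simp add: power_int_diff field_simps)
    then show "qbinom q n k * (- c) powi (int k - int n) * q ^ (Suc n - k choose 2) * w ^ k
        = q ^ (Suc n choose 2) / (- c) ^ n * (qbinom q n k * ((- (c * w / q ^ n)) ^ k * q ^ (k choose 2)))"
      by (simp only: key) (simp add: field_simps)
  qed simp
  also have "\<dots> = q ^ (Suc n choose 2) / (- c) ^ n * qpoch (c * w / q ^ n) q n"
    by (simp add: qbinomial_theorem[OF qq] sum_distrib_left)
  finally show ?thesis .
qed

lemma inverse_qpoch_divide_power_expansion:
  assumes qq: "\<And>m. qpoch q q m \<noteq> 0" and q: "q \<noteq> 0" and c: "c \<noteq> 0"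
    and d: "\<And>j. c / q ^ n * q ^ j \<noteq> 1"
  shows "1 / qpoch (q / c) q n * (\<Sum>k\<le>n. qbinom q n k * (- c) powi (int k - int n)
            * q ^ ((n + 1 - k) choose 2) * q ^ (k * N) / qpoch c q N)
       = 1 / qpoch (c / q ^ n) q N"
proof -
  define Q where "Q = qpoch (c * q ^ N / q ^ n) q n"
  have nz: "qpoch (c / q ^ n) q M \<noteq> 0" for M
    by (rule qpoch_nonzero) (use d in auto)
  have "qpoch (c / q ^ n) q n * qpoch c q N = qpoch (c / q ^ n) q (n + N)"
    using q by (simp add: qpoch_add)
  also have "\<dots> = qpoch (c / q ^ n) q N * Q"
    by (simp add: Q_def add.commute[of n] qpoch_add)
  finally have split: "qpoch (c / q ^ n) q n * qpoch c q N = qpoch (c / q ^ n) q N * Q" .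
  have reflect: "qpoch (c / q ^ n) q n * q ^ (Suc n choose 2) = (- c) ^ n * qpoch (q / c) q n"
    by (rule qpoch_reflect[OF q c])
  then have "qpoch (q / c) q n \<noteq> 0"
    using nz[of n] q by auto
  then have prefactor: "1 / qpoch (q / c) q n * (q ^ (Suc n choose 2) / (- c) ^ n) = 1 / qpoch (c / q ^ n) q n"
    using reflect nz[of n] c by (simp add: divide_simps) (simp add: ac_simps)
  have "(\<Sum>k\<le>n. qbinom q n k * (- c) powi (int k - int n) * q ^ ((n + 1 - k) choose 2) * q ^ (k * N) / qpoch c q N)
      = (\<Sum>k\<le>n. qbinom q n k * (- c) powi (int k - int n) * q ^ (Suc n - k choose 2) * (q ^ N) ^ k) / qpoch c q N"
    by (simp add: sum_divide_distrib mult.commute[of _ N] flip: power_mult)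
  also have "\<dots> = q ^ (Suc n choose 2) / (- c) ^ n * Q / qpoch c q N"
    by (simp only: qbinomial_theorem_reversed[OF qq q c] Q_def)
  finally have "1 / qpoch (q / c) q n * (\<Sum>k\<le>n. qbinom q n k * (- c) powi (int k - int n)
            * q ^ ((n + 1 - k) choose 2) * q ^ (k * N) / qpoch c q N)
      = 1 / qpoch (q / c) q n * (q ^ (Suc n choose 2) / (- c) ^ n) * Q / qpoch c q N"
    by simp
  also have "\<dots> = Q / (qpoch (c / q ^ n) q n * qpoch c q N)"
    by (simp only: prefactor) simp
  also have "\<dots> = 1 / qpoch (c / q ^ n) q N"
    using split nz[of "N + n"] by (simp add: qpoch_add Q_def)
  finally show ?thesis .
qed

lemma qpoch_LIMSEQ:
  assumes "norm q < 1"
  shows "convergent_prod (\<lambda>j. 1 - a * q ^ j)" and "qpoch a q \<longlonglongrightarrow> (\<Prod>j. 1 - a * q ^ j)"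
proof -
  have "summable (\<lambda>j. norm a * norm q ^ j)"
    using assms by (intro summable_mult summable_geometric) simp
  then have "summable (\<lambda>j. norm ((1 - a * q ^ j) - 1))"
    by (simp add: norm_mult norm_power)
  then show conv: "convergent_prod (\<lambda>j. 1 - a * q ^ j)"
    by (intro abs_convergent_prod_imp_convergent_prod summable_imp_abs_convergent_prod)
  have "(\<lambda>m. qpoch a q (Suc m)) \<longlonglongrightarrow> (\<Prod>j. 1 - a * q ^ j)"
    using convergent_prod_LIMSEQ[OF conv] by (simp add: qpoch_def lessThan_Suc_atMost)
  then show "qpoch a q \<longlonglongrightarrow> (\<Prod>j. 1 - a * q ^ j)"
    by (rule LIMSEQ_imp_Suc)
qed

lemma Bseq_qpoch: "norm q < 1 \<Longrightarrow> Bseq (qpoch a q)"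
  using convergent_imp_Bseq convergentI qpoch_LIMSEQ(2) by blast

lemma Bseq_inverse_qpoch:
  assumes "norm q < 1" and "\<And>j. a * q ^ j \<noteq> 1"
  shows "Bseq (\<lambda>m. 1 / qpoch a q m)"
proof -
  have "(\<Prod>j. 1 - a * q ^ j) \<noteq> 0"
    using prodinf_nonzero[OF qpoch_LIMSEQ(1)[OF assms(1)]] assms(2) by simp
  then have "(\<lambda>m. 1 / qpoch a q m) \<longlonglongrightarrow> 1 / (\<Prod>j. 1 - a * q ^ j)"
    by (intro tendsto_divide tendsto_const qpoch_LIMSEQ(2)[OF assms(1)])
  then show ?thesis
    using convergent_imp_Bseq convergentI by blast
qed

lemma mult_power_neq_one:
  assumes "norm (q :: complex) < 1"
  shows "q * q ^ j \<noteq> 1"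
proof -
  have "norm (q ^ Suc j) < 1"
    using assms by (simp only: norm_power power_less_one_iff norm_ge_zero) simp
  then show ?thesis
    by auto
qed

lemma qpoch_q_nonzero: "norm q < 1 \<Longrightarrow> qpoch q q m \<noteq> 0"
  by (rule qpoch_nonzero) (rule mult_power_neq_one)

lemma summable_on_geometric_pairs:
  fixes r s :: real
  assumes "0 \<le> r" "r < 1" "0 \<le> s" "s < 1"
  shows "(\<lambda>(i, j). r ^ i * s ^ j) summable_on UNIV"
proof -
  have "(\<lambda>(i, j). r ^ i * s ^ j) summable_on Sigma UNIV (\<lambda>_. UNIV)"
  proof (rule summable_on_SigmaI[where g = "\<lambda>i. r ^ i / (1 - s)"])
    fix i :: nat
    have "(\<lambda>j. r ^ i * s ^ j) sums (r ^ i * (1 / (1 - s)))"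
      using assms by (intro sums_mult geometric_sums) auto
    then show "((\<lambda>j. (\<lambda>(i, j). r ^ i * s ^ j) (i, j)) has_sum r ^ i / (1 - s)) UNIV"
      using assms by (auto intro!: sums_nonneg_imp_has_sum)
  next
    have "summable (\<lambda>i. r ^ i / (1 - s))"
      using assms by (intro summable_divide summable_geometric) auto
    then show "(\<lambda>i. r ^ i / (1 - s)) summable_on UNIV"
      using assms by (subst summable_on_UNIV_nonneg_real_iff) auto
  qed (use assms in auto)
  then show ?thesis by simp
qed

lemma has_sum_sum:
  fixes f :: "'i \<Rightarrow> 'a \<Rightarrow> 'b::topological_comm_monoid_add"
  assumes "finite I" and "\<And>i. i \<in> I \<Longrightarrow> (f i has_sum s i) A"
  shows "((\<lambda>x. \<Sum>i\<in>I. f i x) has_sum (\<Sum>i\<in>I. s i)) A"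
  using assms by (induction I rule: finite_induct) (auto intro: has_sum_add)

definition Phi3_term :: "complex \<Rightarrow> complex \<Rightarrow> complex \<Rightarrow> complex \<Rightarrow> complex \<Rightarrow> complex
    \<Rightarrow> complex \<Rightarrow> complex \<Rightarrow> nat \<times> nat \<Rightarrow> complex" where
  "Phi3_term q a a' b b' c x y = (\<lambda>(m, n). qpoch a q m * qpoch a' q n * qpoch b q m * qpoch b' q n
     / (qpoch q q m * qpoch q q n * qpoch c q (m + n)) * x ^ m * y ^ n)"

lemma Phi3_eq_infsum: "Phi3 q a a' b b' c x y = (\<Sum>\<^sub>\<infinity>p\<in>UNIV. Phi3_term q a a' b b' c x y p)"
  by (simp add: Phi3_def Phi3_term_def)

lemma Phi3_term_scaled:
  "Phi3_term q a a' b b' c (x * q ^ k) (y * q ^ k) (i, j)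
     = Phi3_term q a a' b b' 0 x y (i, j) * (q ^ (k * (i + j)) / qpoch c q (i + j))"
proof -
  let ?A = "qpoch a q i * qpoch a' q j * qpoch b q i * qpoch b' q j / (qpoch q q i * qpoch q q j)"
  have "(x * q ^ k) ^ i * (y * q ^ k) ^ j = x ^ i * y ^ j * q ^ (k * (i + j))"
    unfolding power_mult_distrib distrib_left power_add power_mult by (simp only: ac_simps)
  then have "Phi3_term q a a' b b' c (x * q ^ k) (y * q ^ k) (i, j)
      = ?A / qpoch c q (i + j) * (x ^ i * y ^ j * q ^ (k * (i + j)))"
    by (simp add: Phi3_term_def mult.assoc)
  also have "\<dots> = Phi3_term q a a' b b' 0 x y (i, j) * (q ^ (k * (i + j)) / qpoch c q (i + j))"
    by (simp add: Phi3_term_def ac_simps)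
  finally show ?thesis .
qed

lemma Phi3_term_summable:
  assumes q: "norm q < 1" and x: "norm x < 1" and y: "norm y < 1" and c: "\<And>j. c * q ^ j \<noteq> 1"
  shows "Phi3_term q a a' b b' c x y summable_on UNIV"
proof -
  obtain Ka where Ka: "\<And>m. norm (qpoch a q m) \<le> Ka"
    using Bseq_qpoch[OF q] by (auto simp: Bseq_def)
  obtain Ka' where Ka': "\<And>m. norm (qpoch a' q m) \<le> Ka'"
    using Bseq_qpoch[OF q] by (auto simp: Bseq_def)
  obtain Kb where Kb: "\<And>m. norm (qpoch b q m) \<le> Kb"
    using Bseq_qpoch[OF q] by (auto simp: Bseq_def)
  obtain Kb' where Kb': "\<And>m. norm (qpoch b' q m) \<le> Kb'"
    using Bseq_qpoch[OF q] by (auto simp: Bseq_def)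
  obtain Kq where Kq: "\<And>m. norm (1 / qpoch q q m) \<le> Kq"
    using Bseq_inverse_qpoch[OF q mult_power_neq_one[OF q]] by (auto simp: Bseq_def)
  obtain Kc where Kc: "\<And>m. norm (1 / qpoch c q m) \<le> Kc"
    using Bseq_inverse_qpoch[OF q c] by (auto simp: Bseq_def)
  define K where "K = Ka * Ka' * Kb * Kb' * Kq * Kq * Kc"
  define g where "g = (\<lambda>(i, j). K * (norm x ^ i * norm y ^ j))"
  have g_summable: "g summable_on UNIV"
    using summable_on_cmult_right[OF summable_on_geometric_pairs[of "norm x" "norm y"], of K] x y
    by (simp add: g_def case_prod_unfold)
  have bound: "norm (Phi3_term q a a' b b' c x y p) \<le> g p" for p
  proof -
    obtain i j where p: "p = (i, j)"
      by fastforce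
    have "Phi3_term q a a' b b' c x y p = qpoch a q i * qpoch a' q j * qpoch b q i * qpoch b' q j
        * (1 / qpoch q q i) * (1 / qpoch q q j) * (1 / qpoch c q (i + j)) * x ^ i * y ^ j"
      by (simp add: Phi3_term_def p)
    also have "norm \<dots> \<le> Ka * Ka' * Kb * Kb' * Kq * Kq * Kc * norm x ^ i * norm y ^ j"
      unfolding norm_mult norm_power by (intro mult_mono') (simp_all add: Ka Ka' Kb Kb' Kq Kc)
    also have "\<dots> = g p"
      by (simp add: g_def K_def p ac_simps)
    finally show ?thesis .
  qed
  have "(\<lambda>p. norm (Phi3_term q a a' b b' c x y p)) summable_on UNIV"
    by (rule summable_on_comparison_test[OF g_summable]) (simp_all add: bound)
  then show ?thesis
    by (rule abs_summable_summable)
qed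

lemma norm_mult_power_less_one:
  assumes "norm (q :: complex) < 1" and "norm x < 1"
  shows "norm (x * q ^ k) < 1"
proof -
  have "norm x * norm q ^ k \<le> norm x"
    using assms(1) by (intro mult_left_le power_le_one) simp_all
  then show ?thesis
    using assms(2) by (simp add: norm_mult norm_power)
qed

lemma Phi3_linear_combination:
  fixes w c :: "nat \<Rightarrow> complex"
  assumes q: "norm q < 1" and x: "norm x < 1" and y: "norm y < 1"
    and c: "\<And>k j. k \<le> n \<Longrightarrow> c k * q ^ j \<noteq> 1"
    and coeffs: "\<And>N. (\<Sum>k\<le>n. w k * q ^ (k * N) / qpoch (c k) q N) = 1 / qpoch d q N"
  shows "(\<Sum>k\<le>n. w k * Phi3 q a a' b b' (c k) (x * q ^ k) (y * q ^ k)) = Phi3 q a a' b b' d x y"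
proof -
  have "((\<lambda>p. \<Sum>k\<le>n. w k * Phi3_term q a a' b b' (c k) (x * q ^ k) (y * q ^ k) p)
      has_sum (\<Sum>k\<le>n. w k * Phi3 q a a' b b' (c k) (x * q ^ k) (y * q ^ k))) UNIV"
    unfolding Phi3_eq_infsum
    by (intro has_sum_sum has_sum_cmult_right has_sum_infsum Phi3_term_summable
        q norm_mult_power_less_one x y c) auto
  moreover have "(\<Sum>k\<le>n. w k * Phi3_term q a a' b b' (c k) (x * q ^ k) (y * q ^ k) p)
      = Phi3_term q a a' b b' d x y p" for p
  proof -
    obtain i j where p: "p = (i, j)"
      by fastforce
    have "(\<Sum>k\<le>n. w k * Phi3_term q a a' b b' (c k) (x * q ^ k) (y * q ^ k) (i, j))
        = Phi3_term q a a' b b' 0 x y (i, j) * (\<Sum>k\<le>n. w k * q ^ (k * (i + j)) / qpoch (c k) q (i + j))"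
      by (simp add: Phi3_term_scaled sum_distrib_left ac_simps)
    also have "\<dots> = Phi3_term q a a' b b' 0 x y (i, j) * (q ^ (0 * (i + j)) / qpoch d q (i + j))"
      by (simp add: coeffs)
    also have "\<dots> = Phi3_term q a a' b b' d x y (i, j)"
      using Phi3_term_scaled[of q a a' b b' d x 0 y i j] by simp
    finally show ?thesis
      by (simp add: p)
  qed
  ultimately show ?thesis
    by (simp add: Phi3_eq_infsum infsumI)
qed

lemma Phi3_c_divide_power:
  assumes q0: "q \<noteq> 0" and q: "norm q < 1" and x: "norm x < 1" and y: "norm y < 1"
    and c: "c \<noteq> 0" and d: "\<And>j. c / q ^ n * q ^ j \<noteq> 1"
  shows "Phi3 q a a' b b' (c / q ^ n) x y =
           1 / qpoch (q / c) q n *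
           (\<Sum>k\<le>n. qbinom q n k * (- c) powi (int k - int n) * q ^ ((n + 1 - k) choose 2)
                      * Phi3 q a a' b b' c (x * q ^ k) (y * q ^ k))"
proof -
  have "c * q ^ j \<noteq> 1" for j
    using d[of "n + j"] q0 by (simp add: power_add)
  moreover have "(\<Sum>k\<le>n. 1 / qpoch (q / c) q n * (qbinom q n k * (- c) powi (int k - int n)
      * q ^ ((n + 1 - k) choose 2)) * q ^ (k * N) / qpoch c q N) = 1 / qpoch (c / q ^ n) q N" for N
    using inverse_qpoch_divide_power_expansion[OF qpoch_q_nonzero[OF q] q0 c d, of N]
    by (simp add: sum_distrib_left ac_simps)
  ultimately have "Phi3 q a a' b b' (c / q ^ n) x y
      = (\<Sum>k\<le>n. 1 / qpoch (q / c) q n * (qbinom q n k * (- c) powi (int k - int n)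
          * q ^ ((n + 1 - k) choose 2)) * Phi3 q a a' b b' c (x * q ^ k) (y * q ^ k))"
    by (intro Phi3_linear_combination[symmetric] q x y)
  then show ?thesis
    by (simp add: sum_distrib_left mult.assoc)
qed

lemma Phi3_c_mult_power:
  assumes q: "norm q < 1" and x: "norm x < 1" and y: "norm y < 1"
    and c: "\<And>j. c * q ^ j \<noteq> 1"
  shows "Phi3 q a a' b b' (c * q ^ n) x y =
           (\<Sum>k\<le>n. qbinom q n k * c ^ k * q ^ (2 * (k choose 2)) * qpoch (c * q ^ k) q (n - k)
                      * Phi3 q a a' b b' (c * q ^ k) (x * q ^ k) (y * q ^ k))"
proof -
  have "c * q ^ k * q ^ j \<noteq> 1" for k j
    using c[of "k + j"] by (simp add: power_add mult.assoc)
  then show ?thesis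
    using Phi3_linear_combination[OF q x y, where c = "\<lambda>k. c * q ^ k" and d = "c * q ^ n"]
      inverse_qpoch_mult_power_expansion[OF qpoch_q_nonzero[OF q] c]
    by simp
qed

theorem theorem13:
  fixes q a a' b b' c x y :: complex and n :: nat
  assumes "0 < norm q" and "norm q < 1"
    and "norm x < 1" and "norm y < 1"
  shows "((c \<noteq> 0 \<and> (\<forall>j::int. j \<ge> - int n \<longrightarrow> c * q powi j \<noteq> 1)) \<longrightarrow>
           Phi3 q a a' b b' (c / q ^ n) x y =
             1 / qpoch (q / c) q n *
             (\<Sum>k\<le>n. qbinom q n k * (- c) powi (int k - int n) * q ^ ((n + 1 - k) choose 2)
                        * Phi3 q a a' b b' c (x * q ^ k) (y * q ^ k)))
       \<and> ((\<forall>j::nat. c * q ^ j \<noteq> 1) \<longrightarrow>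
           Phi3 q a a' b b' (c * q ^ n) x y =
             (\<Sum>k\<le>n. qbinom q n k * c ^ k * q ^ (2 * (k choose 2)) * qpoch (c * q ^ k) q (n - k)
                        * Phi3 q a a' b b' (c * q ^ k) (x * q ^ k) (y * q ^ k)))"
proof -
  have "q \<noteq> 0"
    using assms(1) by auto
  moreover have "c / q ^ n * q ^ j \<noteq> 1"
    if "\<forall>j::int. j \<ge> - int n \<longrightarrow> c * q powi j \<noteq> 1" for j
    using that \<open>q \<noteq> 0\<close> by (auto simp: power_int_diff dest: spec[of _ "int j - int n"])
  ultimately show ?thesis
    using assms by (intro conjI impI Phi3_c_divide_power Phi3_c_mult_power) auto
qed

end
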